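(* Let $x$ be a real number with $x\notin[-1,1]$. For $n\in\mathbb N$ and integers $d\geq 1$ let $S_{n,d}(x)=\sum_{k=0}^nU_{d-1}(T_{(d+1)^k}(x))\prod_{j=0}^k\frac{1}{U_d(T_{(d+1)^j}(x))}$. Then the limit $\lim_{n+d\rightarrow\infty}S_{n,d}(x)$ exists (i.e. there is a real $L$ such that for every $\varepsilon>0$ there exists $N$ with $|S_{n,d}(x)-L|<\varepsilon$ whenever $n\in\mathbb N$, $d\ge1$, $n+d\geq N$) and it equals $\mathrm{sign}(x)\left(|x|-\sqrt{x^2-1}\right)$, the root closest to zero of $X^2-2xX+1$.
   Context: $T_n$ and $U_n$ denote the Chebyshev polynomials of the first and second kind, defined by $T_0=1$, $T_1=x$, $T_{n+1}=2xT_n-T_{n-1}$ and $U_0=1$, $U_1=2x$, $U_{n+1}=2xU_n-U_{n-1}$ for $n\geq1$. $\mathrm{sign}(x)\in\{\pm1\}$ is the sign of $x$. *)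

theory Defs
  imports Complex_Main
begin

fun chebT :: "nat \<Rightarrow> real \<Rightarrow> real" where
  "chebT 0 x = 1"
| "chebT (Suc 0) x = x"
| "chebT (Suc (Suc n)) x = 2 * x * chebT (Suc n) x - chebT n x"

fun chebU :: "nat \<Rightarrow> real \<Rightarrow> real" where
  "chebU 0 x = 1"
| "chebU (Suc 0) x = 2 * x"
| "chebU (Suc (Suc n)) x = 2 * x * chebU (Suc n) x - chebU n x"

definition S :: "nat \<Rightarrow> nat \<Rightarrow> real \<Rightarrow> real" where
  "S n d x = (\<Sum>k=0..n. chebU (d - 1) (chebT ((d+1)^k) x) *
                 (\<Prod>j=0..k. 1 / chebU d (chebT ((d+1)^j) x)))"

end

theory Submission
  imports Defs
begin

(* Write x = (a + 1/a)/2 with |a| > 1. Then T_m(x) = (a^m + a^-m)/2 and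
   U_e(x) (a - 1/a) = a^(e+1) - a^-(e+1), so the product in S_{n,d}(x) telescopes to
   (a - 1/a)/(a^M - a^-M) with M = (d+1)^(k+1), and the k-th summand becomes
   (a - 1/a) (h(a^((d+1)^k)) - h(a^((d+1)^(k+1)))) with h(B) = 1/(B^2 - 1).
   Summing again, S_{n,d}(x) = 1/a - (a - 1/a) h(a^((d+1)^(n+1))), and the error term
   vanishes because (d+1)^(n+1) > n + d. Finally 1/a is the root of X^2 - 2xX + 1
   closest to zero. *)

lemma chebT_Joukowski:
  fixes a :: real
  assumes "a \<noteq> 0"
  shows "chebT n ((a + 1/a) / 2) = (a^n + 1/a^n) / 2"
proof (induction n rule: induct_nat_012)
  case (ge2 n)
  have "chebT (Suc (Suc n)) ((a + 1/a) / 2)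
          = (a + 1/a) * chebT (Suc n) ((a + 1/a) / 2) - chebT n ((a + 1/a) / 2)"
    by simp
  also have "\<dots> = (a + 1/a) * ((a^Suc n + 1/a^Suc n) / 2) - (a^n + 1/a^n) / 2"
    by (simp only: ge2)
  also have "\<dots> = (a^Suc (Suc n) + 1/a^Suc (Suc n)) / 2"
    using assms by (simp add: field_simps)
  finally show ?case .
qed simp_all

lemma chebU_Joukowski:
  fixes a :: real
  assumes "a \<noteq> 0"
  shows "chebU n ((a + 1/a) / 2) * (a - 1/a) = a^Suc n - 1/a^Suc n"
proof (induction n rule: induct_nat_012)
  case (ge2 n)
  have "chebU (Suc (Suc n)) ((a + 1/a) / 2)
          = (a + 1/a) * chebU (Suc n) ((a + 1/a) / 2) - chebU n ((a + 1/a) / 2)"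
    by simp
  then have "chebU (Suc (Suc n)) ((a + 1/a) / 2) * (a - 1/a)
          = (a + 1/a) * (chebU (Suc n) ((a + 1/a) / 2) * (a - 1/a))
            - chebU n ((a + 1/a) / 2) * (a - 1/a)"
    by (simp only: left_diff_distrib mult.assoc)
  also have "\<dots> = (a + 1/a) * (a^Suc (Suc n) - 1/a^Suc (Suc n)) - (a^Suc n - 1/a^Suc n)"
    by (simp only: ge2)
  also have "\<dots> = a^Suc (Suc (Suc n)) - 1/a^Suc (Suc (Suc n))"
    using assms by (simp add: field_simps)
  finally show ?case .
qed (use assms in \<open>simp_all add: field_simps\<close>)

lemma power_sub_inverse_nonzero:
  fixes a :: real
  assumes "1 < \<bar>a\<bar>" and "0 < m"
  shows "a^m - 1/a^m \<noteq> 0"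
proof
  assume "a^m - 1/a^m = 0"
  then have "\<bar>a^m\<bar> = 1 / \<bar>a^m\<bar>"
    by simp
  moreover have "1 < \<bar>a^m\<bar>"
    using assms by (simp add: power_abs)
  ultimately show False
    by (metis divide_less_eq_1_pos less_trans zero_less_one not_less_iff_gr_or_eq)
qed

lemma diff_inverse_square_minus_one:
  fixes B P :: real
  assumes "B \<noteq> 0" "P \<noteq> 0" "B^2 \<noteq> 1" "(P*B)^2 \<noteq> 1"
  shows "1/(B^2 - 1) - 1/((P*B)^2 - 1) = (P - 1/P) / ((B - 1/B) * (P*B - 1/(P*B)))"
proof -
  have nonzero: "B^2 - 1 \<noteq> 0" "(P*B)^2 - 1 \<noteq> 0"
    using assms by simp_all
  have cancel: "Z * B^2 / (X * Y) = (Z/P) / ((X/B) * (Y/(P*B)))" if "X \<noteq> 0" "Y \<noteq> 0" for X Y Z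
    using that assms by (simp add: field_simps power2_eq_square)
  have "P - 1/P = (P^2 - 1) / P" "B - 1/B = (B^2 - 1) / B"
    "P*B - 1/(P*B) = ((P*B)^2 - 1) / (P*B)"
    using assms by (simp_all add: field_simps power2_eq_square)
  moreover have "1/(B^2 - 1) - 1/((P*B)^2 - 1) = (P^2 - 1) * B^2 / ((B^2 - 1) * ((P*B)^2 - 1))"
    using nonzero by (simp add: field_simps)
  ultimately show ?thesis
    using cancel[OF nonzero] by simp
qed

lemma chebU_chebT_Joukowski:
  fixes a :: real
  assumes "1 < \<bar>a\<bar>" and "0 < m"
  shows "chebU e (chebT m ((a + 1/a) / 2)) = (a^(m * Suc e) - 1/a^(m * Suc e)) / (a^m - 1/a^m)"
proof -
  have "a \<noteq> 0" and "a^m \<noteq> 0"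
    using assms(1) by auto
  have "chebU e (chebT m ((a + 1/a) / 2)) * (a^m - 1/a^m) = a^(m * Suc e) - 1/a^(m * Suc e)"
    using chebU_Joukowski[OF \<open>a^m \<noteq> 0\<close>, of e] by (simp only: chebT_Joukowski[OF \<open>a \<noteq> 0\<close>] power_mult)
  then show ?thesis
    using power_sub_inverse_nonzero[OF assms] by (simp add: eq_divide_eq)
qed

lemma prod_inverse_chebU_chebT_Joukowski:
  fixes a :: real
  assumes "1 < \<bar>a\<bar>"
  shows "(\<Prod>j=0..k. 1 / chebU d (chebT ((d+1)^j) ((a + 1/a) / 2)))
           = (a - 1/a) / (a^((d+1)^Suc k) - 1/a^((d+1)^Suc k))"
proof (induction k)
  case 0
  show ?case
    using chebU_chebT_Joukowski[OF assms, of 1 d] by simp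
next
  case (Suc k)
  define m where "m = (d+1)^Suc k"
  have "0 < m" and next_m: "(d+1)^Suc (Suc k) = m * Suc d"
    unfolding m_def by simp_all
  then show ?case
    unfolding prod.atLeast0_atMost_Suc Suc.IH m_def[symmetric] next_m
    using chebU_chebT_Joukowski[OF assms \<open>0 < m\<close>, of d] power_sub_inverse_nonzero[OF assms \<open>0 < m\<close>]
    by simp
qed

lemma S_summand_Joukowski:
  fixes a :: real
  assumes "1 < \<bar>a\<bar>" and "0 < m" and "1 \<le> d"
  shows "chebU (d-1) (chebT m ((a + 1/a) / 2)) * ((a - 1/a) / (a^(m * Suc d) - 1/a^(m * Suc d)))
         = (a - 1/a) * (1 / ((a^m)^2 - 1) - 1 / ((a^(m * Suc d))^2 - 1))"
proof -
  define B where "B = a^m"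
  define P where "P = a^(m * d)"
  have powers: "a^(m * Suc d) = P * B"
    unfolding P_def B_def by (simp add: power_add mult.commute)
  have "1 < \<bar>P * B\<bar>"
    unfolding powers[symmetric] using assms by (simp add: power_abs)
  moreover have "1 < \<bar>B\<bar>" "1 < \<bar>P\<bar>"
    using assms unfolding P_def B_def by (simp_all add: power_abs)
  ultimately have "B \<noteq> 0" "P \<noteq> 0" "B^2 \<noteq> 1" "(P*B)^2 \<noteq> 1"
    by (auto simp: power2_eq_1_iff)
  have "chebU (d-1) (chebT m ((a + 1/a) / 2)) = (P - 1/P) / (B - 1/B)"
    using chebU_chebT_Joukowski[OF assms(1,2), of "d-1"] assms(3) unfolding P_def B_def by simp
  then show ?thesis
    unfolding powers B_def[symmetric] diff_inverse_square_minus_one[OF \<open>B \<noteq> 0\<close> \<open>P \<noteq> 0\<close> \<open>B^2 \<noteq> 1\<close> \<open>(P*B)^2 \<noteq> 1\<close>]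
    by simp
qed

lemma S_Joukowski:
  fixes a :: real
  assumes "1 < \<bar>a\<bar>" and "1 \<le> d"
  shows "S n d ((a + 1/a) / 2) = 1/a - (a - 1/a) / ((a^((d+1)^Suc n))^2 - 1)"
proof -
  define h where "h k = 1 / ((a^((d+1)^k))^2 - 1)" for k
  have summand: "chebU (d-1) (chebT ((d+1)^k) ((a + 1/a) / 2))
                   * (\<Prod>j=0..k. 1 / chebU d (chebT ((d+1)^j) ((a + 1/a) / 2)))
                 = (a - 1/a) * (h k - h (Suc k))" for k
  proof -
    have "0 < (d+1)^k" and next_power: "(d+1)^Suc k = (d+1)^k * Suc d"
      by simp_all
    show ?thesis
      unfolding prod_inverse_chebU_chebT_Joukowski[OF assms(1)] h_def next_power
      by (rule S_summand_Joukowski[OF assms(1) \<open>0 < (d+1)^k\<close> assms(2)])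
  qed
  have "a \<noteq> 0" and "a^2 - 1 \<noteq> 0"
    using assms(1) by (auto simp: power2_eq_1_iff)
  then have "(a - 1/a) * h 0 = 1/a"
    unfolding h_def by (simp add: field_simps power2_eq_square)
  moreover have "S n d ((a + 1/a) / 2) = (\<Sum>k=0..n. (a - 1/a) * (h k - h (Suc k)))"
    unfolding S_def summand ..
  then have "S n d ((a + 1/a) / 2) = (a - 1/a) * (h 0 - h (Suc n))"
    by (simp only: atLeast0AtMost sum_distrib_left[symmetric] sum_telescope)
  ultimately show ?thesis
    unfolding h_def by (simp add: right_diff_distrib)
qed

lemma Joukowski_error_tendsto_zero:
  fixes a :: real
  assumes "1 < \<bar>a\<bar>"
  shows "(\<lambda>M. (a - 1/a) / ((a^M)^2 - 1)) \<longlonglongrightarrow> 0"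
proof -
  have "1 < norm (a^2)"
    using one_less_power[OF assms, of 2] by simp
  have "filterlim (\<lambda>M. (a^M)^2 - 1) at_infinity sequentially"
    using tendsto_add_filterlim_at_infinity'[OF filterlim_realpow_sequentially_gt1[OF \<open>1 < norm (a^2)\<close>] tendsto_const[of "-1"]]
    by (simp add: power_mult[symmetric] mult.commute)
  then show ?thesis
    by (rule tendsto_divide_0[OF tendsto_const])
qed

lemma add_less_Suc_power:
  fixes d n :: nat
  assumes "1 \<le> d"
  shows "n + d < (d+1)^Suc n"
proof (induction n)
  case (Suc n)
  then have "Suc n + d < 2 * (d+1)^Suc n"
    by simp
  also have "\<dots> \<le> (d+1) * (d+1)^Suc n"
    using assms by (intro mult_right_mono) simp_all
  also have "\<dots> = (d+1)^Suc (Suc n)"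
    by (simp only: power_Suc)
  finally show ?case .
qed (use assms in simp)

lemma Joukowski_preimage:
  fixes x :: real
  assumes "1 < \<bar>x\<bar>"
  obtains a where "1 < \<bar>a\<bar>" and "x = (a + 1/a) / 2" and "1/a = sgn x * (\<bar>x\<bar> - sqrt (x^2 - 1))"
proof -
  define s where "s = sqrt (x^2 - 1)"
  define a where "a = sgn x * (\<bar>x\<bar> + s)"
  have "1 < x^2"
    using one_less_power[OF assms, of 2] by simp
  then have "0 \<le> s" and "(\<bar>x\<bar> + s) * (\<bar>x\<bar> - s) = 1"
    unfolding s_def by (simp_all add: algebra_simps power2_eq_square)
  moreover have "sgn x * sgn x = 1"
    using assms by (auto simp: sgn_if)
  ultimately have "a * (sgn x * (\<bar>x\<bar> - s)) = 1"
    unfolding a_def by (metis mult.assoc mult.left_commute mult_1_right)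
  then have inverse_a: "1/a = sgn x * (\<bar>x\<bar> - s)"
    using inverse_unique by (simp add: inverse_eq_divide[symmetric])
  have "x = (a + 1/a) / 2"
    unfolding inverse_a unfolding a_def by (simp add: algebra_simps abs_mult_sgn)
  moreover have "1 < \<bar>a\<bar>"
    using assms \<open>0 \<le> s\<close> unfolding a_def by (simp add: abs_mult)
  ultimately show ?thesis
    using that inverse_a unfolding s_def by blast
qed

theorem corollary1p2:
  fixes x :: real
  assumes "x \<notin> {-1..1}"
  shows "\<forall>\<epsilon>>0. \<exists>N::nat. \<forall>n d::nat. d \<ge> 1 \<longrightarrow> n + d \<ge> N \<longrightarrow>
           \<bar>S n d x - sgn x * (\<bar>x\<bar> - sqrt (x^2 - 1))\<bar> < \<epsilon>"
proof (intro allI impI)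
  fix \<epsilon> :: real
  assume "0 < \<epsilon>"
  have "1 < \<bar>x\<bar>"
    using assms by auto
  then obtain a where a: "1 < \<bar>a\<bar>" and x: "x = (a + 1/a) / 2"
    and limit: "1/a = sgn x * (\<bar>x\<bar> - sqrt (x^2 - 1))"
    by (rule Joukowski_preimage)
  obtain N where N: "\<forall>M\<ge>N. norm ((a - 1/a) / ((a^M)^2 - 1) - 0) < \<epsilon>"
    using LIMSEQ_D[OF Joukowski_error_tendsto_zero[OF a] \<open>0 < \<epsilon>\<close>] by blast
  show "\<exists>N::nat. \<forall>n d::nat. d \<ge> 1 \<longrightarrow> n + d \<ge> N \<longrightarrow>
          \<bar>S n d x - sgn x * (\<bar>x\<bar> - sqrt (x^2 - 1))\<bar> < \<epsilon>"
  proof (intro exI allI impI)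
    fix n d :: nat
    assume "1 \<le> d" and "N \<le> n + d"
    then have "N \<le> (d+1)^Suc n"
      using add_less_Suc_power[of d n] by linarith
    then show "\<bar>S n d x - sgn x * (\<bar>x\<bar> - sqrt (x^2 - 1))\<bar> < \<epsilon>"
      using N S_Joukowski[OF a \<open>1 \<le> d\<close>, of n, folded x] unfolding limit[symmetric] by simp
  qed
qed

end
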